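(* Let $A = \langle Q, \delta, \gamma, F\rangle$ be a pomset automaton that is well-nested and finitely supported. Then for every state $q \in Q$ there exists a series-parallel rational expression $e_q$ such that $[\![ e_q ]\!] = L_A(q)$.
   Context: Fix a finite alphabet $\Sigma$. A pomset is an isomorphism class of labelled posets $\langle C, \leq, \lambda\rangle$ with $\lambda: C \to \Sigma$; $1$ is the empty pomset and $a\in\Sigma$ denotes the one-point pomset labelled $a$. For pomsets $U,V$ (with disjoint carriers) the sequential composition $U\cdot V$ has carrier $C_U\cup C_V$, order ${\leq_U}\cup{\leq_V}\cup(C_U\times C_V)$ and the union labelling; the parallel composition $U\parallel V$ is the same but with order ${\leq_U}\cup{\leq_V}$. The set $\mathsf{Pom}^{\mathsf{sp}}$ of series-parallel pomsets is the smallest set of pomsets containing $1$ and all $a\in\Sigma$ and closed under $\cdot$ and $\parallel$. For pomset languages, $\mathcal U\cdot\mathcal V=\{U\cdot V\}$, $\mathcal U\parallel\mathcal V=\{U\parallel V\}$, $\mathcal U^*=\bigcup_n\mathcal U^n$ and $\mathcal U^\dagger=\bigcup_n \mathcal U^{(n)}$, where $\mathcal U^0=\mathcal U^{(0)}=\{1\}$, $\mathcal U^{n+1}=\mathcal U\cdot\mathcal U^n$, $\mathcal U^{(n+1)}=\mathcal U\parallel\mathcal U^{(n)}$. Series-parallel rational expressions (spr-expressions) are given by $e,f ::= 0 \mid 1 \mid a\in\Sigma \mid e+f \mid e\cdot f \mid e\parallel f \mid e^* \mid e^\dagger$, with semantics $[\![0]\!]=\emptyset$, $[\![1]\!]=\{1\}$,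 $[\![a]\!]=\{a\}$, $[\![e+f]\!]=[\![e]\!]\cup[\![f]\!]$, $[\![e\cdot f]\!]=[\![e]\!]\cdot[\![f]\!]$, $[\![e\parallel f]\!]=[\![e]\!]\parallel[\![f]\!]$, $[\![e^*]\!]=[\![e]\!]^*$, $[\![e^\dagger]\!]=[\![e]\!]^\dagger$. A pomset automaton (PA) is $A=\langle Q,\delta,\gamma,F\rangle$ with $F\subseteq Q$ the accepting states, $\delta: Q\times\Sigma\to Q$ and $\gamma: Q\times Q\times Q\to Q$. Every PA is assumed to contain states $\bot\in Q\setminus F$ and $\top\in F$ with $\delta(\bot,a)=\delta(\top,a)=\bot$ and $\gamma(\bot,r,s)=\gamma(\top,r,s)=\bot$ for all $a,r,s$. The trace relation ${\to_A}\subseteq Q\times\mathsf{Pom}^{\mathsf{sp}}\times Q$ is the smallest relation with: $q\xrightarrow{1}_A q$; $q\xrightarrow{a}_A\delta(q,a)$; if $q\xrightarrow{U}_A q''$ and $q''\xrightarrow{V}_A q'$ then $q\xrightarrow{U\cdot V}_A q'$; if $r\xrightarrow{U}_A r'\in F$ and $s\xrightarrow{V}_A s'\in F$ then $q\xrightarrow{U\parallel V}_A\gamma(q,r,s)$. The language of $q$ is $L_A(q)=\{U : \exists q'\in F.\ q\xrightarrow{U}_A q'\}$. The trace dependency relation $\preceq_A$ is the smallest preorder on $Q$ such that $r,s\preceq_A q$ whenever $\gamma(q,r,s)\neq\bot$, $\delta(q,a)\preceq_A q$ for all $a$, and $\gamma(q,r,s)\preceq_A q$ for all $r,s$. Write $q\prec_A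 q'$ iff $q\preceq_A q'$ and $q'\not\preceq_A q$. The support $\pi_A(q)$ is the smallest $\preceq_A$-downward-closed subset of $Q$ containing $q$; $A$ is finitely supported if every $\pi_A(q)$ is finite. A state $q$ is sequential if $r,s\prec_A q$ whenever $\gamma(q,r,s)\neq\bot$. A state $q\in F$ is recursive if it is not sequential, $\delta(q,a)=\bot$ for all $a\in\Sigma$, and whenever $\gamma(q,r,s)\neq\bot$ we have $s=q$, $r\prec_A q$ and $\gamma(q,r,s)=\top$. $A$ is well-nested if every state is sequential or recursive. *)

theory Defs
  imports Main
begin

text \<open>Pomsets are isomorphism classes of
finite labelled posets, represented as sets of representatives.\<close>

type_synonym 'a lpo = "nat set \<times> (nat \<times> nat) set \<times> (nat \<Rightarrow> 'a)"

definition lpo_wf :: "'a lpo \<Rightarrow> bool" where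
  "lpo_wf u = (case u of (C, R, l) \<Rightarrow>
     finite C \<and> R \<subseteq> C \<times> C \<and> refl_on C R \<and> antisym R \<and> trans R)"

definition lpo_iso :: "'a lpo \<Rightarrow> 'a lpo \<Rightarrow> bool" where
  "lpo_iso u v = (case u of (C1, R1, l1) \<Rightarrow> case v of (C2, R2, l2) \<Rightarrow>
     (\<exists>f. bij_betw f C1 C2 \<and>
          (\<forall>x\<in>C1. \<forall>y\<in>C1. (x, y) \<in> R1 \<longleftrightarrow> (f x, f y) \<in> R2) \<and>
          (\<forall>x\<in>C1. l2 (f x) = l1 x)))"

type_synonym 'a pomset = "'a lpo set"

definition pcls :: "'a lpo \<Rightarrow> 'a pomset" where
  "pcls u = {v. lpo_wf v \<and> lpo_iso u v}"

definition pomsets :: "'a pomset set" where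
  "pomsets = {pcls u | u. lpo_wf u}"

definition prep :: "'a pomset \<Rightarrow> 'a lpo" where
  "prep U = (SOME u. u \<in> U)"

definition lpo_emb :: "(nat \<Rightarrow> nat) \<Rightarrow> 'a lpo \<Rightarrow> 'a lpo" where
  "lpo_emb f u = (case u of (C, R, l) \<Rightarrow>
     (f ` C, map_prod f f ` R, \<lambda>y. l (inv_into C f y)))"

definition lpo_seq :: "'a lpo \<Rightarrow> 'a lpo \<Rightarrow> 'a lpo" where
  "lpo_seq u v = (case lpo_emb (\<lambda>x. 2 * x) u of (C1, R1, l1) \<Rightarrow>
                  case lpo_emb (\<lambda>x. 2 * x + 1) v of (C2, R2, l2) \<Rightarrow>
     (C1 \<union> C2, R1 \<union> R2 \<union> C1 \<times> C2, \<lambda>x. if x \<in> C1 then l1 x else l2 x))"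

definition lpo_par :: "'a lpo \<Rightarrow> 'a lpo \<Rightarrow> 'a lpo" where
  "lpo_par u v = (case lpo_emb (\<lambda>x. 2 * x) u of (C1, R1, l1) \<Rightarrow>
                  case lpo_emb (\<lambda>x. 2 * x + 1) v of (C2, R2, l2) \<Rightarrow>
     (C1 \<union> C2, R1 \<union> R2, \<lambda>x. if x \<in> C1 then l1 x else l2 x))"

definition pom_one :: "'a pomset" where
  "pom_one = pcls ({}, {}, undefined)"

definition pom_sym :: "'a \<Rightarrow> 'a pomset" where
  "pom_sym a = pcls ({0}, {(0, 0)}, \<lambda>_. a)"

definition pom_seq :: "'a pomset \<Rightarrow> 'a pomset \<Rightarrow> 'a pomset" where
  "pom_seq U V = pcls (lpo_seq (prep U) (prep V))"

definition pom_par :: "'a pomset \<Rightarrow> 'a pomset \<Rightarrow> 'a pomset" where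
  "pom_par U V = pcls (lpo_par (prep U) (prep V))"

inductive_set sp_pomsets :: "'a pomset set" where
  sp_one: "pom_one \<in> sp_pomsets"
| sp_sym: "pom_sym a \<in> sp_pomsets"
| sp_seq: "U \<in> sp_pomsets \<Longrightarrow> V \<in> sp_pomsets \<Longrightarrow> pom_seq U V \<in> sp_pomsets"
| sp_par: "U \<in> sp_pomsets \<Longrightarrow> V \<in> sp_pomsets \<Longrightarrow> pom_par U V \<in> sp_pomsets"

definition lang_seq :: "'a pomset set \<Rightarrow> 'a pomset set \<Rightarrow> 'a pomset set" where
  "lang_seq L M = {pom_seq U V | U V. U \<in> L \<and> V \<in> M}"

definition lang_par :: "'a pomset set \<Rightarrow> 'a pomset set \<Rightarrow> 'a pomset set" where
  "lang_par L M = {pom_par U V | U V. U \<in> L \<and> V \<in> M}"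

fun lang_pow :: "'a pomset set \<Rightarrow> nat \<Rightarrow> 'a pomset set" where
  "lang_pow L 0 = {pom_one}"
| "lang_pow L (Suc n) = lang_seq L (lang_pow L n)"

fun lang_ppow :: "'a pomset set \<Rightarrow> nat \<Rightarrow> 'a pomset set" where
  "lang_ppow L 0 = {pom_one}"
| "lang_ppow L (Suc n) = lang_par L (lang_ppow L n)"

definition lang_star :: "'a pomset set \<Rightarrow> 'a pomset set" where
  "lang_star L = (\<Union>n. lang_pow L n)"

definition lang_dagger :: "'a pomset set \<Rightarrow> 'a pomset set" where
  "lang_dagger L = (\<Union>n. lang_ppow L n)"

datatype 'a spr =
    Zero | One | Sym 'a | Plus "'a spr" "'a spr" | Seq "'a spr" "'a spr"
  | Par "'a spr" "'a spr" | Star "'a spr" | Dagger "'a spr"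

fun spr_sem :: "'a spr \<Rightarrow> 'a pomset set" where
  "spr_sem Zero = {}"
| "spr_sem One = {pom_one}"
| "spr_sem (Sym a) = {pom_sym a}"
| "spr_sem (Plus e f) = spr_sem e \<union> spr_sem f"
| "spr_sem (Seq e f) = lang_seq (spr_sem e) (spr_sem f)"
| "spr_sem (Par e f) = lang_par (spr_sem e) (spr_sem f)"
| "spr_sem (Star e) = lang_star (spr_sem e)"
| "spr_sem (Dagger e) = lang_dagger (spr_sem e)"

definition is_PA :: "('q \<Rightarrow> 'a \<Rightarrow> 'q) \<Rightarrow> ('q \<Rightarrow> 'q \<Rightarrow> 'q \<Rightarrow> 'q) \<Rightarrow> 'q set \<Rightarrow> 'q \<Rightarrow> 'q \<Rightarrow> bool" where
  "is_PA \<delta> \<gamma> F qbot qtop =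
     (qbot \<notin> F \<and> qtop \<in> F \<and>
      (\<forall>a. \<delta> qbot a = qbot \<and> \<delta> qtop a = qbot) \<and>
      (\<forall>r s. \<gamma> qbot r s = qbot \<and> \<gamma> qtop r s = qbot))"

inductive trace :: "('q \<Rightarrow> 'a \<Rightarrow> 'q) \<Rightarrow> ('q \<Rightarrow> 'q \<Rightarrow> 'q \<Rightarrow> 'q) \<Rightarrow> 'q set
                    \<Rightarrow> 'q \<Rightarrow> 'a pomset \<Rightarrow> 'q \<Rightarrow> bool"
  for \<delta> \<gamma> F where
  tr_one: "trace \<delta> \<gamma> F q pom_one q"
| tr_sym: "trace \<delta> \<gamma> F q (pom_sym a) (\<delta> q a)"
| tr_seq: "trace \<delta> \<gamma> F q U q'' \<Longrightarrow> trace \<delta> \<gamma> F q'' V q' \<Longrightarrow> trace \<delta> \<gamma> F q (pom_seq U V) q'"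
| tr_par: "trace \<delta> \<gamma> F r U r' \<Longrightarrow> r' \<in> F \<Longrightarrow> trace \<delta> \<gamma> F s V s' \<Longrightarrow> s' \<in> F \<Longrightarrow>
           trace \<delta> \<gamma> F q (pom_par U V) (\<gamma> q r s)"

definition PA_lang :: "('q \<Rightarrow> 'a \<Rightarrow> 'q) \<Rightarrow> ('q \<Rightarrow> 'q \<Rightarrow> 'q \<Rightarrow> 'q) \<Rightarrow> 'q set \<Rightarrow> 'q \<Rightarrow> 'a pomset set" where
  "PA_lang \<delta> \<gamma> F q = {U. \<exists>q'\<in>F. trace \<delta> \<gamma> F q U q'}"

inductive dep_step :: "('q \<Rightarrow> 'a \<Rightarrow> 'q) \<Rightarrow> ('q \<Rightarrow> 'q \<Rightarrow> 'q \<Rightarrow> 'q) \<Rightarrow> 'q \<Rightarrow> 'q \<Rightarrow> 'q \<Rightarrow> bool"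
  for \<delta> \<gamma> qbot where
  ds_left: "\<gamma> q r s \<noteq> qbot \<Longrightarrow> dep_step \<delta> \<gamma> qbot r q"
| ds_right: "\<gamma> q r s \<noteq> qbot \<Longrightarrow> dep_step \<delta> \<gamma> qbot s q"
| ds_delta: "dep_step \<delta> \<gamma> qbot (\<delta> q a) q"
| ds_gamma: "dep_step \<delta> \<gamma> qbot (\<gamma> q r s) q"

definition dep :: "('q \<Rightarrow> 'a \<Rightarrow> 'q) \<Rightarrow> ('q \<Rightarrow> 'q \<Rightarrow> 'q \<Rightarrow> 'q) \<Rightarrow> 'q \<Rightarrow> 'q \<Rightarrow> 'q \<Rightarrow> bool" where
  "dep \<delta> \<gamma> qbot = (dep_step \<delta> \<gamma> qbot)\<^sup>*\<^sup>*"

definition dep_strict :: "('q \<Rightarrow> 'a \<Rightarrow> 'q) \<Rightarrow> ('q \<Rightarrow> 'q \<Rightarrow> 'q \<Rightarrow> 'q) \<Rightarrow> 'q \<Rightarrow> 'q \<Rightarrow> 'q \<Rightarrow> bool" where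
  "dep_strict \<delta> \<gamma> qbot q q' = (dep \<delta> \<gamma> qbot q q' \<and> \<not> dep \<delta> \<gamma> qbot q' q)"

definition support :: "('q \<Rightarrow> 'a \<Rightarrow> 'q) \<Rightarrow> ('q \<Rightarrow> 'q \<Rightarrow> 'q \<Rightarrow> 'q) \<Rightarrow> 'q \<Rightarrow> 'q \<Rightarrow> 'q set" where
  "support \<delta> \<gamma> qbot q = \<Inter>{S. q \<in> S \<and> (\<forall>p\<in>S. \<forall>p'. dep \<delta> \<gamma> qbot p' p \<longrightarrow> p' \<in> S)}"

definition fin_supported :: "('q \<Rightarrow> 'a \<Rightarrow> 'q) \<Rightarrow> ('q \<Rightarrow> 'q \<Rightarrow> 'q \<Rightarrow> 'q) \<Rightarrow> 'q \<Rightarrow> bool" where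
  "fin_supported \<delta> \<gamma> qbot = (\<forall>q. finite (support \<delta> \<gamma> qbot q))"

definition sequential_state :: "('q \<Rightarrow> 'a \<Rightarrow> 'q) \<Rightarrow> ('q \<Rightarrow> 'q \<Rightarrow> 'q \<Rightarrow> 'q) \<Rightarrow> 'q \<Rightarrow> 'q \<Rightarrow> bool" where
  "sequential_state \<delta> \<gamma> qbot q =
     (\<forall>r s. \<gamma> q r s \<noteq> qbot \<longrightarrow> dep_strict \<delta> \<gamma> qbot r q \<and> dep_strict \<delta> \<gamma> qbot s q)"

definition recursive_state :: "('q \<Rightarrow> 'a \<Rightarrow> 'q) \<Rightarrow> ('q \<Rightarrow> 'q \<Rightarrow> 'q \<Rightarrow> 'q) \<Rightarrow> 'q set \<Rightarrow> 'q \<Rightarrow> 'q \<Rightarrow> 'q \<Rightarrow> bool" where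
  "recursive_state \<delta> \<gamma> F qbot qtop q =
     (q \<in> F \<and> \<not> sequential_state \<delta> \<gamma> qbot q \<and> (\<forall>a. \<delta> q a = qbot) \<and>
      (\<forall>r s. \<gamma> q r s \<noteq> qbot \<longrightarrow> s = q \<and> dep_strict \<delta> \<gamma> qbot r q \<and> \<gamma> q r s = qtop))"

definition well_nested :: "('q \<Rightarrow> 'a \<Rightarrow> 'q) \<Rightarrow> ('q \<Rightarrow> 'q \<Rightarrow> 'q \<Rightarrow> 'q) \<Rightarrow> 'q set \<Rightarrow> 'q \<Rightarrow> 'q \<Rightarrow> bool" where
  "well_nested \<delta> \<gamma> F qbot qtop =
     (\<forall>q. sequential_state \<delta> \<gamma> qbot q \<or> recursive_state \<delta> \<gamma> F qbot qtop q)"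

end

theory Submission
  imports Defs
begin

(*
  Induction on the size of the support.  A recursive state q admits only the trace 1 and
  traces U \<parallel> V with U accepted by a fork r \<prec> q and V again accepted from q, so its
  language is the dagger of the union of the fork languages.  For a sequential state q,
  every fork \<gamma> p r s \<noteq> qbot below q has r, s strictly below q (if p is recursive, because
  then p itself lies strictly below q).  Hence the accepting traces from q are the walks of a
  finite graph on the support of q whose edges carry rational languages, namely letters and
  products L(r) \<parallel> L(s), and McNaughton--Yamada state elimination turns these walks into
  an expression.  The only pomset algebra needed is that sequential composition is
  associative with unit 1, which is checked on disjoint representatives.
*)

section \<open>Isomorphism classes of labelled posets\<close>

lemma lpo_iso_refl: "lpo_iso u u"
  unfolding lpo_iso_def by (cases u) (auto intro!: exI[of _ id])

lemma lpo_iso_sym: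
  assumes "lpo_iso u v"
  shows "lpo_iso v u"
proof -
  obtain C1 R1 l1 C2 R2 l2 where uv: "u = (C1, R1, l1)" "v = (C2, R2, l2)"
    by (cases u; cases v)
  from assms obtain f where f: "bij_betw f C1 C2"
    "\<forall>x\<in>C1. \<forall>y\<in>C1. (x, y) \<in> R1 \<longleftrightarrow> (f x, f y) \<in> R2" "\<forall>x\<in>C1. l2 (f x) = l1 x"
    unfolding lpo_iso_def uv by auto
  let ?g = "inv_into C1 f"
  have g: "bij_betw ?g C2 C1"
    using f(1) by (rule bij_betw_inv_into)
  have gC: "?g x \<in> C1" and fg: "f (?g x) = x" if "x \<in> C2" for x
    using that g f(1) by (auto simp: bij_betw_apply bij_betw_inv_into_right)
  have "\<forall>x\<in>C2. \<forall>y\<in>C2. (x, y) \<in> R2 \<longleftrightarrow> (?g x, ?g y) \<in> R1"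
    using f(2) gC fg by metis
  moreover have "\<forall>x\<in>C2. l1 (?g x) = l2 x"
    using f(3) gC fg by metis
  ultimately show ?thesis
    using g unfolding lpo_iso_def uv by auto
qed

lemma lpo_iso_trans:
  assumes "lpo_iso u v" "lpo_iso v w"
  shows "lpo_iso u w"
proof -
  obtain C1 R1 l1 C2 R2 l2 C3 R3 l3 where uvw: "u = (C1, R1, l1)" "v = (C2, R2, l2)" "w = (C3, R3, l3)"
    by (cases u; cases v; cases w)
  from assms(1) obtain f where f: "bij_betw f C1 C2"
    "\<forall>x\<in>C1. \<forall>y\<in>C1. (x, y) \<in> R1 \<longleftrightarrow> (f x, f y) \<in> R2" "\<forall>x\<in>C1. l2 (f x) = l1 x"
    unfolding lpo_iso_def uvw by auto
  from assms(2) obtain g where g: "bij_betw g C2 C3"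
    "\<forall>x\<in>C2. \<forall>y\<in>C2. (x, y) \<in> R2 \<longleftrightarrow> (g x, g y) \<in> R3" "\<forall>x\<in>C2. l3 (g x) = l2 x"
    unfolding lpo_iso_def uvw by auto
  have "f x \<in> C2" if "x \<in> C1" for x
    using f(1) that by (rule bij_betw_apply)
  then show ?thesis
    unfolding lpo_iso_def uvw
    using bij_betw_trans[OF f(1) g(1)] f(2,3) g(2,3) by (simp add: exI[of _ "g \<circ> f"])
qed

lemma pcls_eq: "lpo_iso u v \<Longrightarrow> pcls u = pcls v"
  unfolding pcls_def using lpo_iso_sym lpo_iso_trans by blast

lemma lpo_in_pcls: "lpo_wf u \<Longrightarrow> u \<in> pcls u"
  unfolding pcls_def using lpo_iso_refl by blast

lemma pcls_in_pomsets: "lpo_wf u \<Longrightarrow> pcls u \<in> pomsets"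
  unfolding pomsets_def by blast

lemma prep_pcls:
  assumes "lpo_wf u"
  shows "lpo_wf (prep (pcls u))" "lpo_iso u (prep (pcls u))"
proof -
  have "prep (pcls u) \<in> pcls u"
    unfolding prep_def using lpo_in_pcls[OF assms] by (rule someI)
  then show "lpo_wf (prep (pcls u))" "lpo_iso u (prep (pcls u))"
    unfolding pcls_def by auto
qed

lemma pomset_prep:
  assumes "U \<in> pomsets"
  shows "lpo_wf (prep U)" "pcls (prep U) = U"
  using assms prep_pcls pcls_eq unfolding pomsets_def by blast+

lemma fst_lpo_emb: "fst (lpo_emb f u) = f ` fst u"
  unfolding lpo_emb_def by (cases u) auto

lemma lpo_iso_emb:
  assumes "inj f"
  shows "lpo_iso u (lpo_emb f u)"
proof -
  obtain C R l where u: "u = (C, R, l)"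
    by (cases u)
  have "bij_betw f C (f ` C)"
    using assms by (simp add: bij_betw_imageI inj_on_subset)
  moreover have "\<forall>x\<in>C. \<forall>y\<in>C. (x, y) \<in> R \<longleftrightarrow> (f x, f y) \<in> map_prod f f ` R"
    using assms by (auto simp: inj_eq)
  moreover have "\<forall>x\<in>C. l (inv_into C f (f x)) = l x"
    using assms by (simp add: inv_into_f_f inj_on_subset)
  ultimately show ?thesis
    unfolding lpo_iso_def lpo_emb_def u by auto
qed

lemma lpo_wf_emb:
  assumes "lpo_wf u" "inj f"
  shows "lpo_wf (lpo_emb f u)"
proof -
  obtain C R l where u: "u = (C, R, l)"
    by (cases u)
  have "finite C" "R \<subseteq> C \<times> C" "refl_on C R" "antisym R" "trans R"
    using assms(1) unfolding lpo_wf_def u by auto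
  with assms(2) show ?thesis
    unfolding lpo_wf_def lpo_emb_def u refl_on_def antisym_def trans_def
    by (auto simp: inj_eq)
qed

section \<open>Sequential composition of pomsets is a monoid\<close>

definition lpo_join :: "bool \<Rightarrow> 'a lpo \<Rightarrow> 'a lpo \<Rightarrow> 'a lpo" where
  "lpo_join s u v = (case u of (C1, R1, l1) \<Rightarrow> case v of (C2, R2, l2) \<Rightarrow>
     (C1 \<union> C2, R1 \<union> R2 \<union> (if s then C1 \<times> C2 else {}), \<lambda>x. if x \<in> C1 then l1 x else l2 x))"

lemma lpo_seq_join:
  "lpo_seq u v = lpo_join True (lpo_emb (\<lambda>x. 2 * x) u) (lpo_emb (\<lambda>x. 2 * x + 1) v)"
  unfolding lpo_seq_def lpo_join_def by (simp split: prod.split)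

lemma lpo_par_join:
  "lpo_par u v = lpo_join False (lpo_emb (\<lambda>x. 2 * x) u) (lpo_emb (\<lambda>x. 2 * x + 1) v)"
  unfolding lpo_par_def lpo_join_def by (simp split: prod.split)

lemma fst_lpo_join: "fst (lpo_join s u v) = fst u \<union> fst v"
  unfolding lpo_join_def by (cases u; cases v) auto

lemma lpo_join_assoc: "lpo_join s (lpo_join s u v) w = lpo_join s u (lpo_join s v w)"
  unfolding lpo_join_def by (cases u; cases v; cases w) (auto simp: fun_eq_iff)

lemma lpo_join_empty_left: "lpo_join s ({}, {}, l) u = u"
  unfolding lpo_join_def by (cases u) auto

lemma lpo_iso_join_empty_right: "lpo_iso (lpo_join s u ({}, {}, l)) u"
  unfolding lpo_join_def lpo_iso_def by (cases u) (auto intro!: exI[of _ id])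

lemma join_rel_iff:
  assumes "R1 \<subseteq> C1 \<times> C1" "R2 \<subseteq> C2 \<times> C2" "C1 \<inter> C2 = {}"
  shows "(x, y) \<in> R1 \<union> R2 \<union> (if s then C1 \<times> C2 else {}) \<longleftrightarrow>
    (if x \<in> C1 \<and> y \<in> C1 then (x, y) \<in> R1 else if x \<in> C2 \<and> y \<in> C2 then (x, y) \<in> R2
     else s \<and> x \<in> C1 \<and> y \<in> C2)"
  using assms by auto

lemma lpo_wf_join:
  assumes "lpo_wf u" "lpo_wf v" "fst u \<inter> fst v = {}"
  shows "lpo_wf (lpo_join s u v)"
proof -
  obtain C1 R1 l1 C2 R2 l2 where uv: "u = (C1, R1, l1)" "v = (C2, R2, l2)"
    by (cases u; cases v)
  have wf: "finite C1" "R1 \<subseteq> C1 \<times> C1" "refl_on C1 R1" "antisym R1" "trans R1"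
    "finite C2" "R2 \<subseteq> C2 \<times> C2" "refl_on C2 R2" "antisym R2" "trans R2"
    using assms(1,2) unfolding lpo_wf_def uv by auto
  have disj: "C1 \<inter> C2 = {}"
    using assms(3) unfolding uv by simp
  let ?R = "R1 \<union> R2 \<union> (if s then C1 \<times> C2 else {})"
  have "refl_on (C1 \<union> C2) ?R"
    using wf unfolding refl_on_def by auto
  moreover have "antisym ?R"
    using wf(4,9) disj unfolding antisym_def join_rel_iff[OF wf(2,7) disj]
    by (auto split: if_splits)
  moreover have "trans ?R"
    using wf(5,10) disj unfolding trans_def join_rel_iff[OF wf(2,7) disj]
    by (auto split: if_splits)
  ultimately show ?thesis
    using wf unfolding lpo_wf_def lpo_join_def uv by auto
qed

lemma lpo_iso_join:
  assumes "lpo_iso u u'" "lpo_iso v v'" "lpo_wf u" "lpo_wf v" "lpo_wf u'" "lpo_wf v'"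
    "fst u \<inter> fst v = {}" "fst u' \<inter> fst v' = {}"
  shows "lpo_iso (lpo_join s u v) (lpo_join s u' v')"
proof -
  obtain C1 R1 l1 C2 R2 l2 where uv: "u = (C1, R1, l1)" "v = (C2, R2, l2)"
    by (cases u; cases v)
  obtain C1' R1' l1' C2' R2' l2' where uv': "u' = (C1', R1', l1')" "v' = (C2', R2', l2')"
    by (cases u'; cases v')
  from assms(1) obtain f where f: "bij_betw f C1 C1'"
    "\<forall>x\<in>C1. \<forall>y\<in>C1. (x, y) \<in> R1 \<longleftrightarrow> (f x, f y) \<in> R1'" "\<forall>x\<in>C1. l1' (f x) = l1 x"
    unfolding lpo_iso_def uv uv' by auto
  from assms(2) obtain g where g: "bij_betw g C2 C2'"
    "\<forall>x\<in>C2. \<forall>y\<in>C2. (x, y) \<in> R2 \<longleftrightarrow> (g x, g y) \<in> R2'" "\<forall>x\<in>C2. l2' (g x) = l2 x"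
    unfolding lpo_iso_def uv uv' by auto
  have R: "R1 \<subseteq> C1 \<times> C1" "R2 \<subseteq> C2 \<times> C2" "R1' \<subseteq> C1' \<times> C1'" "R2' \<subseteq> C2' \<times> C2'"
    using assms(3-6) unfolding lpo_wf_def uv uv' by auto
  have disj: "C1 \<inter> C2 = {}" "C1' \<inter> C2' = {}"
    using assms(7,8) unfolding uv uv' by auto
  have fC: "f x \<in> C1'" if "x \<in> C1" for x
    using f(1) that by (rule bij_betw_apply)
  have gC: "g x \<in> C2'" if "x \<in> C2" for x
    using g(1) that by (rule bij_betw_apply)
  define h where "h x = (if x \<in> C1 then f x else g x)" for x
  have "bij_betw h (C1 \<union> C2) (C1' \<union> C2')"
    unfolding h_def using f(1) g(1) disj by (rule bij_betw_disjoint_Un)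
  moreover have "(x, y) \<in> R1 \<union> R2 \<union> (if s then C1 \<times> C2 else {}) \<longleftrightarrow>
      (h x, h y) \<in> R1' \<union> R2' \<union> (if s then C1' \<times> C2' else {})"
    if "x \<in> C1 \<union> C2" "y \<in> C1 \<union> C2" for x y
    unfolding join_rel_iff[OF R(1,2) disj(1)] join_rel_iff[OF R(3,4) disj(2)]
    using that f(2) g(2) disj fC gC unfolding h_def by (auto simp: disjoint_iff)
  moreover have "(if h x \<in> C1' then l1' (h x) else l2' (h x)) = (if x \<in> C1 then l1 x else l2 x)"
    if "x \<in> C1 \<union> C2" for x
    using that f(3) g(3) disj fC gC unfolding h_def by auto
  ultimately show ?thesis
    unfolding lpo_iso_def lpo_join_def uv uv' prod.case by (intro exI[of _ h] conjI ballI) simp_all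
qed

lemma inj_affine: "0 < k \<Longrightarrow> inj (\<lambda>x::nat. k * x + i)"
  by (auto simp: inj_def)

lemma affine_images_disjoint:
  assumes "i < k" "j < k" "i \<noteq> j"
  shows "(\<lambda>x::nat. k * x + i) ` A \<inter> (\<lambda>x. k * x + j) ` B = {}"
proof -
  have "k * x + i \<noteq> k * y + j" for x y
  proof
    assume "k * x + i = k * y + j"
    then have "(k * x + i) mod k = (k * y + j) mod k"
      by simp
    with assms show False
      by simp
  qed
  then show ?thesis
    by blast
qed

lemma lpo_wf_join_copies:
  assumes "lpo_wf u" "lpo_wf v"
  shows "lpo_wf (lpo_join s (lpo_emb (\<lambda>x. 2 * x) u) (lpo_emb (\<lambda>x. 2 * x + 1) v))"
  using affine_images_disjoint[of 0 2 1] inj_affine[of 2 0] inj_affine[of 2 1]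
  by (intro lpo_wf_join lpo_wf_emb assms) (simp_all add: fst_lpo_emb)

lemma lpo_wf_empty: "lpo_wf ({}, {}, l)"
  unfolding lpo_wf_def by simp

lemma pom_one_in_pomsets: "pom_one \<in> pomsets"
  unfolding pom_one_def by (intro pcls_in_pomsets lpo_wf_empty)

lemma pom_sym_in_pomsets: "pom_sym a \<in> pomsets"
  unfolding pom_sym_def by (rule pcls_in_pomsets) (simp add: lpo_wf_def refl_on_def antisym_def trans_def)

lemma pom_seq_in_pomsets: "U \<in> pomsets \<Longrightarrow> V \<in> pomsets \<Longrightarrow> pom_seq U V \<in> pomsets"
  unfolding pom_seq_def lpo_seq_join by (intro pcls_in_pomsets lpo_wf_join_copies pomset_prep)

lemma pom_par_in_pomsets: "U \<in> pomsets \<Longrightarrow> V \<in> pomsets \<Longrightarrow> pom_par U V \<in> pomsets"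
  unfolding pom_par_def lpo_par_join by (intro pcls_in_pomsets lpo_wf_join_copies pomset_prep)

lemma pomset_emb_prep:
  assumes "U \<in> pomsets" "inj f"
  shows "lpo_wf (lpo_emb f (prep U))" "pcls (lpo_emb f (prep U)) = U"
  using lpo_wf_emb[OF pomset_prep(1)[OF assms(1)] assms(2)]
    pcls_eq[OF lpo_iso_emb[OF assms(2)], of "prep U"] pomset_prep(2)[OF assms(1)]
  by simp_all

lemma pom_seq_pcls:
  assumes "lpo_wf u" "lpo_wf v" "fst u \<inter> fst v = {}"
  shows "pom_seq (pcls u) (pcls v) = pcls (lpo_join True u v)"
proof -
  let ?u = "lpo_emb (\<lambda>x. 2 * x) (prep (pcls u))"
  let ?v = "lpo_emb (\<lambda>x. 2 * x + 1) (prep (pcls v))"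
  have inj: "inj (\<lambda>x::nat. 2 * x)" "inj (\<lambda>x::nat. 2 * x + 1)"
    using inj_affine[of 2 0] inj_affine[of 2 1] by simp_all
  have wf: "lpo_wf ?u" "lpo_wf ?v"
    using lpo_wf_emb[OF prep_pcls(1)[OF assms(1)] inj(1)]
      lpo_wf_emb[OF prep_pcls(1)[OF assms(2)] inj(2)] .
  have "lpo_iso ?u u" "lpo_iso ?v v"
    using lpo_iso_trans[OF prep_pcls(2)[OF assms(1)] lpo_iso_emb[OF inj(1)]]
      lpo_iso_trans[OF prep_pcls(2)[OF assms(2)] lpo_iso_emb[OF inj(2)]]
    by (simp_all add: lpo_iso_sym)
  moreover have "fst ?u \<inter> fst ?v = {}"
    using affine_images_disjoint[of 0 2 1] by (simp add: fst_lpo_emb)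
  ultimately have "lpo_iso (lpo_join True ?u ?v) (lpo_join True u v)"
    using wf assms by (intro lpo_iso_join)
  then show ?thesis
    unfolding pom_seq_def lpo_seq_join by (rule pcls_eq)
qed

lemma pom_seq_one_left:
  assumes "U \<in> pomsets"
  shows "pom_seq pom_one U = U"
  using pom_seq_pcls[OF lpo_wf_empty pomset_prep(1)[OF assms]] pomset_prep(2)[OF assms]
  unfolding pom_one_def by (simp add: lpo_join_empty_left)

lemma pom_seq_one_right:
  assumes "U \<in> pomsets"
  shows "pom_seq U pom_one = U"
  using pom_seq_pcls[OF pomset_prep(1)[OF assms] lpo_wf_empty] pomset_prep(2)[OF assms]
  unfolding pom_one_def by (simp add: pcls_eq[OF lpo_iso_join_empty_right])

lemma pom_seq_assoc:
  assumes "U \<in> pomsets" "V \<in> pomsets" "W \<in> pomsets"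
  shows "pom_seq (pom_seq U V) W = pom_seq U (pom_seq V W)"
proof -
  define u v w where "u = lpo_emb (\<lambda>x. 3 * x) (prep U)"
    and "v = lpo_emb (\<lambda>x. 3 * x + 1) (prep V)" and "w = lpo_emb (\<lambda>x. 3 * x + 2) (prep W)"
  have inj: "inj (\<lambda>x::nat. 3 * x)" "inj (\<lambda>x::nat. 3 * x + 1)" "inj (\<lambda>x::nat. 3 * x + 2)"
    using inj_affine[of 3 0] inj_affine[of 3 1] inj_affine[of 3 2] by simp_all
  have wf: "lpo_wf u" "lpo_wf v" "lpo_wf w" and cls: "U = pcls u" "V = pcls v" "W = pcls w"
    unfolding u_def v_def w_def using pomset_emb_prep assms inj by metis+
  have disj: "fst u \<inter> fst v = {}" "fst u \<inter> fst w = {}" "fst v \<inter> fst w = {}"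
    unfolding u_def v_def w_def fst_lpo_emb
    using affine_images_disjoint[of 0 3 1] affine_images_disjoint[of 0 3 2]
      affine_images_disjoint[of 1 3 2] by simp_all
  have "pom_seq (pom_seq U V) W = pcls (lpo_join True (lpo_join True u v) w)"
    unfolding cls using wf disj
    by (simp add: pom_seq_pcls lpo_wf_join fst_lpo_join Int_Un_distrib2)
  also have "\<dots> = pcls (lpo_join True u (lpo_join True v w))"
    by (simp add: lpo_join_assoc)
  also have "\<dots> = pom_seq U (pom_seq V W)"
    unfolding cls using wf disj
    by (simp add: pom_seq_pcls lpo_wf_join fst_lpo_join Int_Un_distrib)
  finally show ?thesis .
qed

section \<open>Series-parallel rational languages\<close>

lemma lang_seqI: "U \<in> A \<Longrightarrow> V \<in> B \<Longrightarrow> pom_seq U V \<in> lang_seq A B"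
  unfolding lang_seq_def by blast

lemma lang_seqE:
  assumes "W \<in> lang_seq A B"
  obtains U V where "W = pom_seq U V" "U \<in> A" "V \<in> B"
  using assms unfolding lang_seq_def by blast

lemma lang_par_pomsets: "A \<subseteq> pomsets \<Longrightarrow> B \<subseteq> pomsets \<Longrightarrow> lang_par A B \<subseteq> pomsets"
  unfolding lang_par_def using pom_par_in_pomsets by blast

lemma lang_star_one: "pom_one \<in> lang_star A"
  unfolding lang_star_def using lang_pow.simps(1) by blast

lemma lang_star_step:
  assumes "U \<in> A" "V \<in> lang_star A"
  shows "pom_seq U V \<in> lang_star A"
proof -
  obtain n where "V \<in> lang_pow A n"
    using assms(2) unfolding lang_star_def by blast
  then have "pom_seq U V \<in> lang_pow A (Suc n)"
    using assms(1) by (simp add: lang_seqI)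
  then show ?thesis
    unfolding lang_star_def by blast
qed

lemma lang_star_induct[consumes 1, case_names one step]:
  assumes "W \<in> lang_star A" "P pom_one" "\<And>U V. U \<in> A \<Longrightarrow> P V \<Longrightarrow> P (pom_seq U V)"
  shows "P W"
proof -
  obtain n where "W \<in> lang_pow A n"
    using assms(1) unfolding lang_star_def by blast
  then show ?thesis
    by (induction n arbitrary: W) (auto elim!: lang_seqE intro: assms(2,3))
qed

lemma lang_star_pomsets:
  assumes "A \<subseteq> pomsets"
  shows "lang_star A \<subseteq> pomsets"
proof
  fix W
  assume "W \<in> lang_star A"
  then show "W \<in> pomsets"
    by (induction rule: lang_star_induct)
      (use assms in \<open>auto intro: pom_one_in_pomsets pom_seq_in_pomsets\<close>)
qed

lemma lang_dagger_one: "pom_one \<in> lang_dagger A"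
  unfolding lang_dagger_def using lang_ppow.simps(1) by blast

lemma lang_dagger_step:
  assumes "U \<in> A" "V \<in> lang_dagger A"
  shows "pom_par U V \<in> lang_dagger A"
proof -
  obtain n where "V \<in> lang_ppow A n"
    using assms(2) unfolding lang_dagger_def by blast
  then have "pom_par U V \<in> lang_ppow A (Suc n)"
    using assms(1) unfolding lang_ppow.simps lang_par_def by blast
  then show ?thesis
    unfolding lang_dagger_def by blast
qed

lemma lang_dagger_induct[consumes 1, case_names one step]:
  assumes "W \<in> lang_dagger A" "P pom_one" "\<And>U V. U \<in> A \<Longrightarrow> P V \<Longrightarrow> P (pom_par U V)"
  shows "P W"
proof -
  obtain n where "W \<in> lang_ppow A n"
    using assms(1) unfolding lang_dagger_def by blast
  then show ?thesis
    by (induction n arbitrary: W) (auto simp: lang_par_def intro: assms(2,3))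
qed

definition sp_rational :: "'a pomset set \<Rightarrow> bool" where
  "sp_rational L \<longleftrightarrow> (\<exists>e. spr_sem e = L)"

lemma sp_rational_empty: "sp_rational {}"
  unfolding sp_rational_def by (metis spr_sem.simps(1))

lemma sp_rational_one: "sp_rational {pom_one}"
  unfolding sp_rational_def by (metis spr_sem.simps(2))

lemma sp_rational_sym: "sp_rational {pom_sym a}"
  unfolding sp_rational_def by (metis spr_sem.simps(3))

lemma sp_rational_Un: "sp_rational A \<Longrightarrow> sp_rational B \<Longrightarrow> sp_rational (A \<union> B)"
  unfolding sp_rational_def by (metis spr_sem.simps(4))

lemma sp_rational_seq: "sp_rational A \<Longrightarrow> sp_rational B \<Longrightarrow> sp_rational (lang_seq A B)"
  unfolding sp_rational_def by (metis spr_sem.simps(5))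

lemma sp_rational_par: "sp_rational A \<Longrightarrow> sp_rational B \<Longrightarrow> sp_rational (lang_par A B)"
  unfolding sp_rational_def by (metis spr_sem.simps(6))

lemma sp_rational_star: "sp_rational A \<Longrightarrow> sp_rational (lang_star A)"
  unfolding sp_rational_def by (metis spr_sem.simps(7))

lemma sp_rational_dagger: "sp_rational A \<Longrightarrow> sp_rational (lang_dagger A)"
  unfolding sp_rational_def by (metis spr_sem.simps(8))

lemma sp_rational_UN:
  "finite I \<Longrightarrow> (\<And>i. i \<in> I \<Longrightarrow> sp_rational (A i)) \<Longrightarrow> sp_rational (\<Union>i\<in>I. A i)"
  by (induction I rule: finite_induct) (auto intro: sp_rational_empty sp_rational_Un)

lemma sp_rational_finite_syms:
  assumes "finite A"
  shows "sp_rational (pom_sym ` A)"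
proof -
  have "sp_rational (\<Union>a\<in>A. {pom_sym a})"
    using assms by (intro sp_rational_UN sp_rational_sym)
  then show ?thesis
    by (simp add: UNION_singleton_eq_range)
qed

section \<open>Walks in graphs with language-labelled edges\<close>

text \<open>The set I constrains only the intermediate states of a walk; this is what makes the
  McNaughton--Yamada recursion walks_insert hold.\<close>

inductive walk :: "'q set \<Rightarrow> ('q \<Rightarrow> 'q \<Rightarrow> 'a pomset set) \<Rightarrow> 'q \<Rightarrow> 'a pomset \<Rightarrow> 'q \<Rightarrow> bool"
  for I E where
  walk_nil: "walk I E p pom_one p"
| walk_edge: "U \<in> E p q \<Longrightarrow> walk I E p U q"
| walk_cons: "U \<in> E p m \<Longrightarrow> m \<in> I \<Longrightarrow> walk I E m V q \<Longrightarrow> walk I E p (pom_seq U V) q"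

definition walks :: "'q set \<Rightarrow> ('q \<Rightarrow> 'q \<Rightarrow> 'a pomset set) \<Rightarrow> 'q \<Rightarrow> 'q \<Rightarrow> 'a pomset set" where
  "walks I E p q = {W. walk I E p W q}"

lemma walk_pomsets:
  assumes "\<forall>p q. E p q \<subseteq> pomsets"
  shows "walk I E p W q \<Longrightarrow> W \<in> pomsets"
  by (induction rule: walk.induct) (use assms in \<open>auto intro: pom_one_in_pomsets pom_seq_in_pomsets\<close>)

lemma walks_pomsets: "\<forall>p q. E p q \<subseteq> pomsets \<Longrightarrow> walks I E p q \<subseteq> pomsets"
  unfolding walks_def by (auto intro: walk_pomsets)

lemma walk_append:
  assumes E: "\<forall>p q. E p q \<subseteq> pomsets"
    and "walk I E p U m" "m \<in> I" "walk I E m V q"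
  shows "walk I E p (pom_seq U V) q"
  using assms(2-4)
proof (induction rule: walk.induct)
  case (walk_nil p)
  then show ?case
    using walk_pomsets[OF E] by (simp add: pom_seq_one_left)
next
  case (walk_edge U p m)
  then show ?case
    by (simp add: walk.walk_cons)
next
  case (walk_cons U p m' U' m)
  have "U \<in> pomsets" "U' \<in> pomsets" "V \<in> pomsets"
    using walk_cons.hyps(1) E walk_pomsets[OF E walk_cons.hyps(3)]
      walk_pomsets[OF E walk_cons.prems(2)] by blast+
  then have "pom_seq (pom_seq U U') V = pom_seq U (pom_seq U' V)"
    by (rule pom_seq_assoc)
  then show ?case
    using walk_cons by (simp add: walk.walk_cons)
qed

lemma walk_mono: "walk I E p W q \<Longrightarrow> I \<subseteq> J \<Longrightarrow> walk J E p W q"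
  by (induction rule: walk.induct) (auto intro: walk.intros)

lemma walks_empty: "walks {} E p q = (if p = q then {pom_one} else {}) \<union> E p q"
  unfolding walks_def by (auto elim: walk.cases intro: walk.intros)

definition walks_through :: "'q set \<Rightarrow> ('q \<Rightarrow> 'q \<Rightarrow> 'a pomset set) \<Rightarrow> 'q \<Rightarrow> 'q \<Rightarrow> 'q \<Rightarrow> 'a pomset set" where
  "walks_through I E x p q =
     lang_seq (walks I E p x) (lang_seq (lang_star (walks I E x x)) (walks I E x q))"

lemma walks_throughE:
  assumes "W \<in> walks_through I E x p q"
  obtains A L B where "W = pom_seq A (pom_seq L B)" "walk I E p A x"
    "L \<in> lang_star (walks I E x x)" "walk I E x B q"
  using assms unfolding walks_through_def walks_def by (auto elim!: lang_seqE)

lemma walks_throughI: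
  "walk I E p A x \<Longrightarrow> L \<in> lang_star (walks I E x x) \<Longrightarrow> walk I E x B q \<Longrightarrow>
    pom_seq A (pom_seq L B) \<in> walks_through I E x p q"
  unfolding walks_through_def walks_def by (intro lang_seqI) simp_all

lemma walk_cons_walks_through:
  assumes E: "\<forall>p q. E p q \<subseteq> pomsets"
    and "U \<in> E p m" "m \<in> insert x I" "V \<in> walks_through I E x m q"
  shows "pom_seq U V \<in> walks_through I E x p q"
proof -
  obtain A L B where V: "V = pom_seq A (pom_seq L B)" "walk I E m A x"
    "L \<in> lang_star (walks I E x x)" "walk I E x B q"
    using assms(4) by (rule walks_throughE)
  have pomsets: "U \<in> pomsets" "A \<in> pomsets" "L \<in> pomsets" "B \<in> pomsets"
    using assms(2) V E walk_pomsets[OF E] lang_star_pomsets[OF walks_pomsets[OF E]] by blast+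
  show ?thesis
  proof (cases "m = x")
    case True
    have "walk I E p U x"
      using assms(2) True by (simp add: walk_edge)
    moreover have "pom_seq A L \<in> lang_star (walks I E x x)"
      using V True by (simp add: lang_star_step walks_def)
    ultimately have "pom_seq U (pom_seq (pom_seq A L) B) \<in> walks_through I E x p q"
      using V(4) by (rule walks_throughI)
    then show ?thesis
      using V pomsets by (simp add: pom_seq_assoc)
  next
    case False
    then have "pom_seq (pom_seq U A) (pom_seq L B) \<in> walks_through I E x p q"
      using assms(2,3) V by (intro walks_throughI walk_cons) simp_all
    then show ?thesis
      using V pomsets by (simp add: pom_seq_assoc pom_seq_in_pomsets)
  qed
qed

lemma walk_cons_walks:
  assumes E: "\<forall>p q. E p q \<subseteq> pomsets"
    and "U \<in> E p m" "m \<in> insert x I" "walk I E m V q"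
  shows "pom_seq U V \<in> walks I E p q \<union> walks_through I E x p q"
proof (cases "m = x")
  case True
  have "pom_seq U (pom_seq pom_one V) \<in> walks_through I E x p q"
    using assms(2,4) True by (simp add: walks_throughI walk_edge lang_star_one)
  then show ?thesis
    using walk_pomsets[OF E assms(4)] by (simp add: pom_seq_one_left)
next
  case False
  then show ?thesis
    using assms(2-4) unfolding walks_def by (simp add: walk.walk_cons)
qed

lemma walk_insert_split:
  assumes E: "\<forall>p q. E p q \<subseteq> pomsets"
  shows "walk (insert x I) E p W q \<Longrightarrow> W \<in> walks I E p q \<union> walks_through I E x p q"
proof (induction rule: walk.induct)
  case (walk_nil p)
  then show ?case
    unfolding walks_def by (simp add: walk.walk_nil)
next
  case (walk_edge U p q)
  then show ?case
    unfolding walks_def by (simp add: walk.walk_edge)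
next
  case (walk_cons U p m V q)
  from walk_cons.IH consider "walk I E m V q" | "V \<in> walks_through I E x m q"
    unfolding walks_def by blast
  then show ?case
  proof cases
    case 1
    then show ?thesis
      by (rule walk_cons_walks[OF E walk_cons.hyps(1,2)])
  next
    case 2
    then show ?thesis
      using walk_cons_walks_through[OF E walk_cons.hyps(1,2)] by blast
  qed
qed

lemma walks_through_subset:
  assumes E: "\<forall>p q. E p q \<subseteq> pomsets"
  shows "walks_through I E x p q \<subseteq> walks (insert x I) E p q"
proof
  have lift: "walk (insert x I) E p W q" if "walk I E p W q" for p W q
    using that subset_insertI by (rule walk_mono)
  have loop: "walk (insert x I) E x L x" if "L \<in> lang_star (walks I E x x)" for L
    using that
  proof (induction rule: lang_star_induct)
    case one
    show ?case
      by (rule walk_nil)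
  next
    case (step U V)
    then have "walk I E x U x"
      by (simp add: walks_def)
    from walk_append[OF E lift[OF this] insertI1 step(2)] show ?case .
  qed
  fix W
  assume "W \<in> walks_through I E x p q"
  then obtain A L B where W: "W = pom_seq A (pom_seq L B)" "walk I E p A x"
    "L \<in> lang_star (walks I E x x)" "walk I E x B q"
    by (rule walks_throughE)
  have "walk (insert x I) E p (pom_seq A (pom_seq L B)) q"
    using walk_append[OF E lift[OF W(2)] insertI1
        walk_append[OF E loop[OF W(3)] insertI1 lift[OF W(4)]]] .
  then show "W \<in> walks (insert x I) E p q"
    unfolding walks_def W(1) by simp
qed

lemma walks_insert:
  assumes "\<forall>p q. E p q \<subseteq> pomsets"
  shows "walks (insert x I) E p q = walks I E p q \<union> walks_through I E x p q"
proof
  show "walks (insert x I) E p q \<subseteq> walks I E p q \<union> walks_through I E x p q"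
    unfolding walks_def[of "insert x I"] using walk_insert_split[OF assms] by blast
  show "walks I E p q \<union> walks_through I E x p q \<subseteq> walks (insert x I) E p q"
    using walks_through_subset[OF assms] walk_mono[OF _ subset_insertI] by (auto simp: walks_def)
qed

lemma sp_rational_walks:
  assumes "finite I" "I \<subseteq> P" "\<forall>p q. E p q \<subseteq> pomsets"
    and "\<And>p q. p \<in> P \<Longrightarrow> q \<in> P \<Longrightarrow> sp_rational (E p q)"
  shows "p \<in> P \<Longrightarrow> q \<in> P \<Longrightarrow> sp_rational (walks I E p q)"
  using assms(1,2)
proof (induction I arbitrary: p q rule: finite_induct)
  case empty
  then show ?case
    unfolding walks_empty using assms(4)
    by (intro sp_rational_Un) (simp_all add: sp_rational_one sp_rational_empty)
next
  case (insert x I)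
  then have "x \<in> P" "I \<subseteq> P"
    by simp_all
  with insert show ?case
    unfolding walks_insert[OF assms(3)] walks_through_def
    by (intro sp_rational_Un sp_rational_seq sp_rational_star) simp_all
qed

section \<open>Languages of well-nested pomset automata\<close>

locale well_nested_PA =
  fixes \<delta> :: "'q \<Rightarrow> 'a::finite \<Rightarrow> 'q" and \<gamma> :: "'q \<Rightarrow> 'q \<Rightarrow> 'q \<Rightarrow> 'q"
    and F :: "'q set" and qbot qtop :: 'q
  assumes PA: "is_PA \<delta> \<gamma> F qbot qtop"
    and well_nested: "well_nested \<delta> \<gamma> F qbot qtop"
    and fin_supported: "fin_supported \<delta> \<gamma> qbot"
begin

abbreviation tr where "tr \<equiv> trace \<delta> \<gamma> F"
abbreviation lang where "lang \<equiv> PA_lang \<delta> \<gamma> F"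
abbreviation dep_le (infix "\<preceq>" 50) where "p \<preceq> q \<equiv> dep \<delta> \<gamma> qbot p q"
abbreviation dep_less (infix "\<prec>" 50) where "p \<prec> q \<equiv> dep_strict \<delta> \<gamma> qbot p q"
abbreviation supp where "supp \<equiv> support \<delta> \<gamma> qbot"
abbreviation sequential where "sequential \<equiv> sequential_state \<delta> \<gamma> qbot"
abbreviation recursive where "recursive \<equiv> recursive_state \<delta> \<gamma> F qbot qtop"

lemma bot_notin_F: "qbot \<notin> F" and top_in_F: "qtop \<in> F"
  and delta_bot: "\<delta> qbot a = qbot" and delta_top: "\<delta> qtop a = qbot"
  and gamma_bot: "\<gamma> qbot r s = qbot" and gamma_top: "\<gamma> qtop r s = qbot"
  using PA unfolding is_PA_def by auto

lemma dep_refl: "p \<preceq> p"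
  unfolding dep_def by simp

lemma dep_trans: "p \<preceq> q \<Longrightarrow> q \<preceq> r \<Longrightarrow> p \<preceq> r"
  unfolding dep_def by simp

lemma dep_delta: "\<delta> p a \<preceq> p"
  unfolding dep_def by (intro r_into_rtranclp ds_delta)

lemma dep_gamma: "\<gamma> p r s \<preceq> p"
  unfolding dep_def by (intro r_into_rtranclp ds_gamma)

lemma dep_gamma_left: "\<gamma> p r s \<noteq> qbot \<Longrightarrow> r \<preceq> p"
  unfolding dep_def by (intro r_into_rtranclp ds_left)

lemma dep_strict_trans: "r \<prec> p \<Longrightarrow> p \<preceq> q \<Longrightarrow> r \<prec> q"
  unfolding dep_strict_def using dep_trans by blast

lemma mem_support: "x \<in> supp q \<longleftrightarrow> x \<preceq> q"
proof
  have "{y. y \<preceq> q} \<in> {S. q \<in> S \<and> (\<forall>p\<in>S. \<forall>p'. p' \<preceq> p \<longrightarrow> p' \<in> S)}"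
    using dep_refl dep_trans by blast
  then show "x \<in> supp q \<Longrightarrow> x \<preceq> q"
    unfolding support_def by blast
  show "x \<preceq> q \<Longrightarrow> x \<in> supp q"
    unfolding support_def by blast
qed

lemma finite_support: "finite (supp q)"
  using fin_supported unfolding fin_supported_def by blast

lemma card_support_less:
  assumes "r \<prec> q"
  shows "card (supp r) < card (supp q)"
proof (rule psubset_card_mono[OF finite_support])
  have "supp r \<subseteq> supp q"
    using assms dep_trans unfolding mem_support dep_strict_def subset_iff by blast
  moreover have "q \<in> supp q" "q \<notin> supp r"
    using assms dep_refl unfolding mem_support dep_strict_def by auto
  ultimately show "supp r \<subset> supp q"
    by blast
qed

lemma dep_bot_top: "y \<preceq> z \<Longrightarrow> z = qbot \<or> z = qtop \<Longrightarrow> y = qbot \<or> y = qtop"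
  unfolding dep_def
  by (induction rule: converse_rtranclp_induct)
    (auto elim: dep_step.cases simp: delta_bot delta_top gamma_bot gamma_top)

lemma sequential_bot_top: "sequential qbot" "sequential qtop"
  unfolding sequential_state_def by (simp_all add: gamma_bot gamma_top)

lemma recursive_stateD:
  assumes "recursive q"
  shows "q \<in> F" "q \<noteq> qbot" "q \<noteq> qtop" "\<delta> q a = qbot"
    and "\<gamma> q r s \<noteq> qbot \<Longrightarrow> s = q \<and> r \<prec> q \<and> \<gamma> q r s = qtop"
  using assms sequential_bot_top bot_notin_F unfolding recursive_state_def by auto

text \<open>Every dependency path leaving a recursive state p either stays at p, falls into
  the sink states, or passes through some r \<prec> p, from which p can never be reached again.\<close>

lemma dep_below_recursive:
  assumes "recursive p" "y \<preceq> p"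
  shows "y = p \<or> y = qbot \<or> y = qtop \<or> (\<exists>r. r \<prec> p \<and> y \<preceq> r)"
  using assms(2)[unfolded dep_def]
proof (induction rule: converse_rtranclp_induct)
  case base
  then show ?case
    by simp
next
  case (step y y')
  from step.IH consider "y' = p" | "y' = qbot \<or> y' = qtop" | r where "r \<prec> p" "y' \<preceq> r"
    by blast
  then show ?case
  proof cases
    case 1
    with step.hyps(1) show ?thesis
      using recursive_stateD[OF assms(1)] dep_refl by (cases rule: dep_step.cases) blast+
  next
    case 2
    then show ?thesis
      using dep_bot_top step.hyps(1) unfolding dep_def by blast
  next
    case 3
    then show ?thesis
      using dep_trans step.hyps(1) unfolding dep_def by blast
  qed
qed

lemma recursive_below_sequential:
  assumes "sequential q" "recursive p" "p \<preceq> q"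
  shows "p \<prec> q"
proof -
  have "\<not> q \<preceq> p"
  proof
    assume "q \<preceq> p"
    then consider "q = p" | "q = qbot \<or> q = qtop" | r where "r \<prec> p" "q \<preceq> r"
      using dep_below_recursive[OF assms(2)] by blast
    then show False
    proof cases
      case 1
      then show False
        using assms(1,2) unfolding recursive_state_def by simp
    next
      case 2
      then have "p = qbot \<or> p = qtop"
        using dep_bot_top assms(3) by blast
      then show False
        using sequential_bot_top assms(2) unfolding recursive_state_def by auto
    next
      case 3
      then show False
        using assms(3) dep_trans unfolding dep_strict_def by blast
    qed
  qed
  then show ?thesis
    using assms(3) unfolding dep_strict_def by simp
qed

lemma trace_dep: "tr p W q \<Longrightarrow> q \<preceq> p"
  by (induction rule: trace.induct) (auto intro: dep_refl dep_trans dep_delta dep_gamma)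

lemma trace_pomsets: "tr p W q \<Longrightarrow> W \<in> pomsets"
  by (induction rule: trace.induct)
    (auto intro: pom_one_in_pomsets pom_sym_in_pomsets pom_seq_in_pomsets pom_par_in_pomsets)

lemma lang_pomsets: "lang q \<subseteq> pomsets"
  unfolding PA_lang_def using trace_pomsets by blast

lemma trace_from_bot: "tr p W q \<Longrightarrow> p = qbot \<Longrightarrow> q = qbot"
  by (induction rule: trace.induct) (auto simp: delta_bot gamma_bot)

lemma trace_from_top: "tr p W q \<Longrightarrow> p = qtop \<Longrightarrow> q = qbot \<or> (q = qtop \<and> W = pom_one)"
proof (induction rule: trace.induct)
  case (tr_seq p U m V q)
  then show ?case
    using trace_from_bot pom_seq_one_left[OF pom_one_in_pomsets] by blast
qed (auto simp: delta_top gamma_top)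

definition fork_lang :: "'q \<Rightarrow> 'a pomset set" where
  "fork_lang q = (\<Union>r\<in>{r. \<gamma> q r q \<noteq> qbot}. lang r)"

lemma recursive_trace:
  assumes "recursive q"
  shows "tr p W y \<Longrightarrow> p = q \<Longrightarrow>
    y = qbot \<or> (y = q \<and> W = pom_one) \<or> (y = qtop \<and> W \<in> lang_dagger (fork_lang q))"
proof (induction rule: trace.induct)
  case (tr_seq p U m V y)
  from tr_seq.IH(1)[OF tr_seq.prems] consider "m = qbot" | "m = q" "U = pom_one"
    | "m = qtop" "U \<in> lang_dagger (fork_lang q)"
    by blast
  then show ?case
  proof cases
    case 1
    then show ?thesis
      using trace_from_bot[OF tr_seq.hyps(2)] by simp
  next
    case 2
    then show ?thesis
      using tr_seq.IH(2) pom_seq_one_left[OF trace_pomsets[OF tr_seq.hyps(2)]] by simp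
  next
    case 3
    with trace_from_top[OF tr_seq.hyps(2)] consider "y = qbot" | "y = qtop" "V = pom_one"
      by blast
    then show ?thesis
      using 3 pom_seq_one_right[OF trace_pomsets[OF tr_seq.hyps(1)]] by cases simp_all
  qed
next
  case (tr_par r U r' s V s' p)
  show ?case
  proof (cases "\<gamma> p r s = qbot")
    case False
    then have s: "s = q" and top: "\<gamma> p r s = qtop" and fork: "\<gamma> q r q \<noteq> qbot"
      using recursive_stateD(5)[OF assms, of r s] tr_par.prems by auto
    have "U \<in> fork_lang q"
      using tr_par.hyps(1,2) fork unfolding fork_lang_def PA_lang_def by blast
    moreover have "s' \<noteq> qbot"
      using tr_par.hyps(4) bot_notin_F by blast
    then have "V \<in> lang_dagger (fork_lang q)"
      using tr_par.IH(2)[OF s] lang_dagger_one by blast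
    ultimately show ?thesis
      using top by (simp add: lang_dagger_step)
  qed simp
qed (simp_all add: recursive_stateD(4)[OF assms])

lemma recursive_lang:
  assumes "recursive q"
  shows "lang q = lang_dagger (fork_lang q)"
proof
  show "lang q \<subseteq> lang_dagger (fork_lang q)"
    unfolding PA_lang_def
    using recursive_trace[OF assms] bot_notin_F lang_dagger_one by fastforce
  show "lang_dagger (fork_lang q) \<subseteq> lang q"
  proof
    fix W
    assume "W \<in> lang_dagger (fork_lang q)"
    then show "W \<in> lang q"
    proof (induction rule: lang_dagger_induct)
      case one
      then show ?case
        using recursive_stateD(1)[OF assms] unfolding PA_lang_def by (auto intro: tr_one)
    next
      case (step U V)
      then obtain r r' s' where "\<gamma> q r q \<noteq> qbot" "tr r U r'" "r' \<in> F" "tr q V s'" "s' \<in> F"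
        unfolding fork_lang_def PA_lang_def by blast
      then have "tr q (pom_par U V) qtop"
        using recursive_stateD(5)[OF assms] tr_par by metis
      then show ?case
        using top_in_F unfolding PA_lang_def by blast
    qed
  qed
qed

definition edge_lang :: "'q \<Rightarrow> 'q \<Rightarrow> 'a pomset set" where
  "edge_lang p p' = pom_sym ` {a. \<delta> p a = p'} \<union>
     (\<Union>(r, s)\<in>{(r, s). \<gamma> p r s = p'}. lang_par (lang r) (lang s))"

lemma edge_lang_pomsets: "\<forall>p p'. edge_lang p p' \<subseteq> pomsets"
  unfolding edge_lang_def
  using lang_par_pomsets[OF lang_pomsets lang_pomsets] pom_sym_in_pomsets by auto

lemma edge_lang_trace: "U \<in> edge_lang p p' \<Longrightarrow> tr p U p'"
  unfolding edge_lang_def lang_par_def PA_lang_def by (auto intro: tr_sym tr_par)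

lemma walk_trace: "walk I edge_lang p W q \<Longrightarrow> tr p W q"
  by (induction rule: walk.induct) (auto intro: tr_one tr_seq edge_lang_trace)

lemma trace_walk: "tr p W y \<Longrightarrow> y \<noteq> qbot \<Longrightarrow> p \<preceq> q \<Longrightarrow> walk (supp q - {qbot}) edge_lang p W y"
proof (induction rule: trace.induct)
  case (tr_one p)
  show ?case
    by (rule walk_nil)
next
  case (tr_sym p a)
  then show ?case
    unfolding edge_lang_def by (auto intro: walk_edge)
next
  case (tr_seq p U m V y)
  have "m \<noteq> qbot"
    using trace_from_bot tr_seq.hyps(2) tr_seq.prems(1) by blast
  moreover have "m \<preceq> q"
    using dep_trans[OF trace_dep[OF tr_seq.hyps(1)] tr_seq.prems(2)] .
  ultimately show ?case
    using tr_seq walk_append[OF edge_lang_pomsets] by (simp add: mem_support)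
next
  case (tr_par r U r' s V s' p)
  then have "pom_par U V \<in> edge_lang p (\<gamma> p r s)"
    unfolding edge_lang_def lang_par_def PA_lang_def by blast
  then show ?case
    by (rule walk_edge)
qed

text \<open>Edges into qbot must be excluded: in general \<gamma> p r s = qbot for infinitely many r, s.\<close>

lemma sp_rational_edge_lang:
  assumes "sequential q" "\<And>r. r \<prec> q \<Longrightarrow> sp_rational (lang r)" "p \<preceq> q" "p' \<noteq> qbot"
  shows "sp_rational (edge_lang p p')"
proof -
  let ?P = "{(r, s). \<gamma> p r s = p'}"
  have below: "r \<prec> q \<and> s \<prec> q" if "\<gamma> p r s = p'" for r s
  proof (cases "sequential p")
    case True
    then show ?thesis
      using that assms(3,4) dep_strict_trans unfolding sequential_state_def by blast
  next
    case False
    then have rec: "recursive p"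
      using well_nested unfolding well_nested_def by blast
    then have "s = p" "r \<prec> p"
      using recursive_stateD(5)[OF rec, of r s] that assms(4) by auto
    moreover have "p \<prec> q"
      using recursive_below_sequential[OF assms(1) rec assms(3)] .
    ultimately show ?thesis
      using dep_strict_trans assms(3) by blast
  qed
  have "?P \<subseteq> supp q \<times> supp q"
    using below by (auto simp: dep_strict_def mem_support)
  then have "finite ?P"
    using finite_support by (blast intro: finite_subset)
  moreover have "sp_rational (lang_par (lang r) (lang s))" if "(r, s) \<in> ?P" for r s
    using that below assms(2) by (simp add: sp_rational_par)
  ultimately have "sp_rational (\<Union>(r, s)\<in>?P. lang_par (lang r) (lang s))"
    by (intro sp_rational_UN) auto
  then show ?thesis
    unfolding edge_lang_def by (intro sp_rational_Un sp_rational_finite_syms) simp_all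
qed

lemma lang_as_walks:
  assumes "q \<noteq> qbot"
  shows "lang q = (\<Union>y\<in>F \<inter> supp q. walks (supp q - {qbot}) edge_lang q y)"
proof
  show "lang q \<subseteq> (\<Union>y\<in>F \<inter> supp q. walks (supp q - {qbot}) edge_lang q y)"
  proof
    fix W
    assume "W \<in> lang q"
    then obtain y where y: "y \<in> F" "tr q W y"
      unfolding PA_lang_def by blast
    then have "y \<noteq> qbot" "y \<in> supp q"
      using bot_notin_F trace_dep mem_support by auto
    then show "W \<in> (\<Union>y\<in>F \<inter> supp q. walks (supp q - {qbot}) edge_lang q y)"
      using y trace_walk[OF y(2) _ dep_refl] unfolding walks_def by blast
  qed
  show "(\<Union>y\<in>F \<inter> supp q. walks (supp q - {qbot}) edge_lang q y) \<subseteq> lang q"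
    unfolding PA_lang_def walks_def using walk_trace by blast
qed

lemma lang_bot: "lang qbot = {}"
  unfolding PA_lang_def using trace_from_bot bot_notin_F by blast

lemma sp_rational_lang_sequential:
  assumes "sequential q" "\<And>r. r \<prec> q \<Longrightarrow> sp_rational (lang r)"
  shows "sp_rational (lang q)"
proof (cases "q = qbot")
  case True
  then show ?thesis
    by (simp add: lang_bot sp_rational_empty)
next
  case False
  let ?I = "supp q - {qbot}"
  have "sp_rational (walks ?I edge_lang q y)" if "y \<in> F \<inter> supp q" for y
    using that False bot_notin_F finite_support dep_refl edge_lang_pomsets
      sp_rational_edge_lang[OF assms]
    by (intro sp_rational_walks[of ?I ?I]) (auto simp: mem_support)
  then show ?thesis
    unfolding lang_as_walks[OF False] by (intro sp_rational_UN) (simp_all add: finite_support)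
qed

lemma sp_rational_lang_recursive:
  assumes "recursive q" "\<And>r. r \<prec> q \<Longrightarrow> sp_rational (lang r)"
  shows "sp_rational (lang q)"
proof -
  have "finite {r. \<gamma> q r q \<noteq> qbot}"
    by (rule finite_subset[OF _ finite_support[of q]]) (auto simp: mem_support dep_gamma_left)
  then have "sp_rational (fork_lang q)"
    unfolding fork_lang_def using assms(2) recursive_stateD(5)[OF assms(1)]
    by (auto intro: sp_rational_UN)
  then show ?thesis
    unfolding recursive_lang[OF assms(1)] by (rule sp_rational_dagger)
qed

lemma sp_rational_lang: "sp_rational (lang q)"
proof (induction "card (supp q)" arbitrary: q rule: less_induct)
  case less
  then have "sp_rational (lang r)" if "r \<prec> q" for r
    using card_support_less that by blast
  then show ?case
    using well_nested sp_rational_lang_sequential sp_rational_lang_recursive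
    unfolding well_nested_def by blast
qed

end

theorem mainTheorem1:
  fixes \<delta> :: "'q \<Rightarrow> 'a::finite \<Rightarrow> 'q"
    and \<gamma> :: "'q \<Rightarrow> 'q \<Rightarrow> 'q \<Rightarrow> 'q"
    and F :: "'q set"
    and qbot qtop :: 'q
  assumes "is_PA \<delta> \<gamma> F qbot qtop"
    and "well_nested \<delta> \<gamma> F qbot qtop"
    and "fin_supported \<delta> \<gamma> qbot"
  shows "\<forall>q. \<exists>e :: 'a spr. spr_sem e = PA_lang \<delta> \<gamma> F q"
proof -
  interpret well_nested_PA \<delta> \<gamma> F qbot qtop
    using assms by unfold_locales
  show ?thesis
    using sp_rational_lang unfolding sp_rational_def by blast
qed

end
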